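(* Let $G$ be a finite non-abelian group and $S\subseteq G$ a nonempty subset, with $\partial S$ its edge boundary in $\mathcal C_G$. (A) If $S$ satisfies any one of: (1) $S\cap Z(G)=\emptyset$; (2) $Z(G)\subseteq S$ and $|S|\le |G|/2$; (3) $S\subseteq Z(G)$; then $\frac{|\partial S|}{|S|}\ge |Z(G)|$. (B) If $S\cap Z(G)\neq\emptyset$ and $Z(G)\setminus S\neq\emptyset$, then $$|\partial S|=|S|\,|Z(G)|+|Z(G)\cap S|\big(|G|-2|S|-|Z(G)\setminus S|\big)+\sum_{u\in S\setminus Z(G)}|\mathcal F_u\setminus S|,$$ where $\mathcal F_u=C(u)\setminus Z(G)$ for $u\in G\setminus Z(G)$.
   Context: For a finite group $G$, the commuting graph $\mathcal C_G$ is the simple undirected graph with vertex set $G$ in which distinct $u,v\in G$ are adjacent iff $uv=vu$. $Z(G)$ is the center of $G$ and $C(v)=\{w\in G: wv=vw\}$ the centralizer of $v$. For $S\subseteq G$, $\partial S$ is the set of edges of $\mathcal C_G$ with one endpoint in $S$ and the other in $G\setminus S$. *)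

theory Defs
  imports Complex_Main "HOL-Algebra.Group"
begin

definition group_center :: "('a, 'b) monoid_scheme \<Rightarrow> 'a set" where
  "group_center G = {z \<in> carrier G. \<forall>g \<in> carrier G. z \<otimes>\<^bsub>G\<^esub> g = g \<otimes>\<^bsub>G\<^esub> z}"

definition centralizer_of :: "('a, 'b) monoid_scheme \<Rightarrow> 'a \<Rightarrow> 'a set" where
  "centralizer_of G v = {w \<in> carrier G. w \<otimes>\<^bsub>G\<^esub> v = v \<otimes>\<^bsub>G\<^esub> w}"

definition commuting_graph_edges :: "('a, 'b) monoid_scheme \<Rightarrow> 'a set set" where
  "commuting_graph_edges G =
     {{u, v} | u v. u \<in> carrier G \<and> v \<in> carrier G \<and> u \<noteq> v \<and> u \<otimes>\<^bsub>G\<^esub> v = v \<otimes>\<^bsub>G\<^esub> u}"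

definition edge_boundary :: "('a, 'b) monoid_scheme \<Rightarrow> 'a set \<Rightarrow> 'a set set" where
  "edge_boundary G S =
     {e \<in> commuting_graph_edges G. \<exists>u v. e = {u, v} \<and> u \<in> S \<and> v \<in> carrier G - S}"

definition F_set :: "('a, 'b) monoid_scheme \<Rightarrow> 'a \<Rightarrow> 'a set" where
  "F_set G u = centralizer_of G u - group_center G"

end

theory Submission
  imports Defs
begin

text \<open>Counting boundary edges by their endpoint in S, |\<partial>S| is the sum over u in S of
  |C(u) - S|. For central u, C(u) = G; for non-central u, C(u) is the disjoint union of Z(G)
  and F_u. This gives the formula (B) for every S, and the bound (A) follows from it in each
  of the three cases, using |Z(G)| \<le> |G|/2: left multiplication by a non-central element
  maps Z(G) injectively into its complement.\<close>

lemma card_edge_boundary_eq_sum: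
  assumes fin: "finite (carrier G)" and SG: "S \<subseteq> carrier G"
  shows "card (edge_boundary G S) = (\<Sum>u\<in>S. card (centralizer_of G u - S))"
proof -
  let ?edge = "\<lambda>(u, v). {u, v}"
  let ?pairs = "SIGMA u:S. centralizer_of G u - S"
  have "edge_boundary G S = ?edge ` ?pairs"
  proof
    show "edge_boundary G S \<subseteq> ?edge ` ?pairs"
    proof
      fix e assume "e \<in> edge_boundary G S"
      then obtain u v u' v' where e: "e = {u, v}" "u \<in> S" "v \<in> carrier G - S"
        and e': "e = {u', v'}" "u' \<otimes>\<^bsub>G\<^esub> v' = v' \<otimes>\<^bsub>G\<^esub> u'"
        unfolding edge_boundary_def commuting_graph_edges_def by blast
      have "v \<otimes>\<^bsub>G\<^esub> u = u \<otimes>\<^bsub>G\<^esub> v" using e e' by (auto simp: doubleton_eq_iff)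
      with e have "(u, v) \<in> ?pairs" unfolding centralizer_of_def by auto
      with e show "e \<in> ?edge ` ?pairs" by force
    qed
    show "?edge ` ?pairs \<subseteq> edge_boundary G S"
      using SG unfolding edge_boundary_def commuting_graph_edges_def centralizer_of_def
      by fastforce
  qed
  moreover have "inj_on ?edge ?pairs"
    by (auto simp: inj_on_def doubleton_eq_iff)
  moreover have "finite S" using fin SG finite_subset by blast
  moreover have "finite (centralizer_of G u)" for u
    using fin unfolding centralizer_of_def by simp
  ultimately show ?thesis by (simp add: card_image)
qed

lemma centralizer_of_central:
  assumes "u \<in> group_center G"
  shows "centralizer_of G u = carrier G"
  using assms unfolding centralizer_of_def group_center_def by auto

lemma centralizer_of_eq_center_Un_F_set:
  assumes "u \<in> carrier G"
  shows "centralizer_of G u = group_center G \<union> F_set G u"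
  using assms unfolding F_set_def centralizer_of_def group_center_def by auto

lemma card_centralizer_of_Diff:
  assumes fin: "finite (carrier G)" and "u \<in> carrier G"
  shows "card (centralizer_of G u - S) = card (group_center G - S) + card (F_set G u - S)"
proof -
  have "centralizer_of G u - S = (group_center G - S) \<union> (F_set G u - S)"
    using centralizer_of_eq_center_Un_F_set[OF assms(2)] by blast
  moreover have "finite (group_center G)" "finite (F_set G u)"
    using fin unfolding group_center_def F_set_def centralizer_of_def by auto
  moreover have "(group_center G - S) \<inter> (F_set G u - S) = {}"
    unfolding F_set_def by blast
  ultimately show ?thesis by (simp add: card_Un_disjoint)
qed

lemma card_edge_boundary_decomp:
  assumes fin: "finite (carrier G)" and SG: "S \<subseteq> carrier G"
  defines "Z \<equiv> group_center G"
  shows "card (edge_boundary G S) =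
           card (S \<inter> Z) * card (carrier G - S) + card (S - Z) * card (Z - S)
           + (\<Sum>u\<in>S - Z. card (F_set G u - S))"
proof -
  have finS: "finite S" using fin SG finite_subset by blast
  have "card (edge_boundary G S) =
          (\<Sum>u\<in>S \<inter> Z. card (centralizer_of G u - S)) + (\<Sum>u\<in>S - Z. card (centralizer_of G u - S))"
    unfolding card_edge_boundary_eq_sum[OF fin SG] using finS by (rule sum.Int_Diff)
  also have "(\<Sum>u\<in>S \<inter> Z. card (centralizer_of G u - S)) = card (S \<inter> Z) * card (carrier G - S)"
    by (simp add: Z_def centralizer_of_central)
  also have "(\<Sum>u\<in>S - Z. card (centralizer_of G u - S))
               = (\<Sum>u\<in>S - Z. card (Z - S) + card (F_set G u - S))"
    using SG by (intro sum.cong) (auto simp: Z_def card_centralizer_of_Diff[OF fin])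
  finally show ?thesis by (simp add: sum.distrib)
qed

lemma (in group) mult_in_group_centerD:
  assumes g: "g \<in> carrier G" and z: "z \<in> group_center G" and gz: "g \<otimes> z \<in> group_center G"
  shows "g \<in> group_center G"
  unfolding group_center_def
proof (intro CollectI conjI ballI g)
  fix h assume h: "h \<in> carrier G"
  have zc: "z \<in> carrier G" using z by (simp add: group_center_def)
  have "g \<otimes> h \<otimes> z = g \<otimes> (z \<otimes> h)"
    using z g h zc by (simp add: m_assoc group_center_def)
  also have "\<dots> = h \<otimes> (g \<otimes> z)"
    using gz g h zc by (simp add: m_assoc[symmetric] group_center_def)
  also have "\<dots> = h \<otimes> g \<otimes> z"
    using g h zc by (simp add: m_assoc)
  finally show "g \<otimes> h = h \<otimes> g" using g h zc by simp
qed

lemma (in group) card_group_center_le_half: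
  assumes fin: "finite (carrier G)" and noncomm: "\<not> comm_group G"
  shows "2 * card (group_center G) \<le> card (carrier G)"
proof -
  let ?Z = "group_center G"
  have ZG: "?Z \<subseteq> carrier G" unfolding group_center_def by auto
  obtain g where g: "g \<in> carrier G" "g \<notin> ?Z"
    using noncomm group_comm_groupI ZG unfolding group_center_def by blast
  have "(\<otimes>) g ` ?Z \<subseteq> carrier G - ?Z"
    using g ZG mult_in_group_centerD by blast
  moreover have "inj_on ((\<otimes>) g) ?Z"
    using g ZG by (intro inj_onI) (metis Units_eq Units_l_cancel subsetD)
  ultimately have "card ?Z \<le> card (carrier G - ?Z)"
    using fin by (metis card_image card_mono finite_Diff)
  also have "\<dots> = card (carrier G) - card ?Z"
    using fin ZG by (simp add: card_Diff_subset finite_subset)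
  finally show ?thesis using card_mono[OF fin ZG] by simp
qed

lemma card_edge_boundary_formula:
  assumes fin: "finite (carrier G)" and SG: "S \<subseteq> carrier G"
  defines "Z \<equiv> group_center G"
  shows "int (card (edge_boundary G S)) =
           int (card S) * int (card Z)
           + int (card (Z \<inter> S)) * (int (card (carrier G)) - 2 * int (card S) - int (card (Z - S)))
           + (\<Sum>u \<in> S - Z. int (card (F_set G u - S)))"
proof -
  have finS: "finite S" and finZ: "finite Z"
    using fin SG finite_subset unfolding Z_def group_center_def by auto
  have "int (card (carrier G - S)) = int (card (carrier G)) - int (card S)"
    using fin SG by (simp add: card_Diff_subset finite_subset card_mono)
  then have "int (card (edge_boundary G S)) =
      int (card (S \<inter> Z)) * (int (card (carrier G)) - int (card S))
      + int (card (S - Z)) * int (card (Z - S)) + (\<Sum>u\<in>S - Z. int (card (F_set G u - S)))"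
    using card_edge_boundary_decomp[OF fin SG] by (simp add: Z_def)
  moreover have "int (card S) = int (card (S \<inter> Z)) + int (card (S - Z))"
    using finS by (metis card_Int_Diff of_nat_add)
  moreover have "int (card Z) = int (card (S \<inter> Z)) + int (card (Z - S))"
    using finZ by (metis card_Int_Diff inf_commute of_nat_add)
  ultimately show ?thesis
    unfolding Int_commute[of Z S] by algebra
qed

lemma card_mult_card_center_le_card_edge_boundary:
  assumes "group G" and fin: "finite (carrier G)" and "\<not> comm_group G" and SG: "S \<subseteq> carrier G"
  defines "Z \<equiv> group_center G"
  assumes "S \<inter> Z = {} \<or> (Z \<subseteq> S \<and> 2 * card S \<le> card (carrier G)) \<or> S \<subseteq> Z"
  shows "card S * card Z \<le> card (edge_boundary G S)"
proof -
  have finZ: "finite Z"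
    using fin finite_subset unfolding Z_def group_center_def by auto
  have cGS: "card (carrier G - S) = card (carrier G) - card S"
    using fin SG by (simp add: card_Diff_subset finite_subset)
  note bd = card_edge_boundary_decomp[OF fin SG, folded Z_def]
  from assms(6) show ?thesis
  proof (elim disjE conjE)
    assume "S \<inter> Z = {}"
    then show ?thesis using bd finZ by (simp add: Diff_triv inf_commute)
  next
    assume "Z \<subseteq> S" "2 * card S \<le> card (carrier G)"
    then have "card S \<le> card (carrier G - S)" "S \<inter> Z = Z" using cGS by auto
    then have "card S * card Z \<le> card (S \<inter> Z) * card (carrier G - S)"
      by (simp add: mult.commute)
    then show ?thesis using bd by linarith
  next
    assume "S \<subseteq> Z"
    moreover have "card S \<le> card Z" using \<open>S \<subseteq> Z\<close> finZ by (rule card_mono[rotated])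
    moreover have "2 * card Z \<le> card (carrier G)"
      using group.card_group_center_le_half[OF assms(1-3)] by (simp add: Z_def)
    ultimately have "card Z \<le> card (carrier G - S)" "S \<inter> Z = S" "S - Z = {}"
      using cGS by auto
    then have "card S * card Z \<le> card (S \<inter> Z) * card (carrier G - S)" by simp
    then show ?thesis using bd by linarith
  qed
qed

theorem lemma3p5:
  fixes G :: "('a, 'b) monoid_scheme" and S :: "'a set"
  assumes "group G" and "finite (carrier G)" and "\<not> comm_group G"
    and "S \<subseteq> carrier G" and "S \<noteq> {}"
  shows "(((S \<inter> group_center G = {})
          \<or> (group_center G \<subseteq> S \<and> real (card S) \<le> real (card (carrier G)) / 2)
          \<or> (S \<subseteq> group_center G))
         \<longrightarrow> real (card (edge_boundary G S)) / real (card S) \<ge> real (card (group_center G)))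
     \<and> (S \<inter> group_center G \<noteq> {} \<and> group_center G - S \<noteq> {} \<longrightarrow>
         int (card (edge_boundary G S)) =
           int (card S) * int (card (group_center G))
           + int (card (group_center G \<inter> S)) *
               (int (card (carrier G)) - 2 * int (card S) - int (card (group_center G - S)))
           + (\<Sum>u \<in> S - group_center G. int (card (F_set G u - S))))"
proof (intro conjI impI)
  assume "S \<inter> group_center G = {}
    \<or> (group_center G \<subseteq> S \<and> real (card S) \<le> real (card (carrier G)) / 2)
    \<or> S \<subseteq> group_center G"
  then have "card S * card (group_center G) \<le> card (edge_boundary G S)"
    by (intro card_mult_card_center_le_card_edge_boundary[OF assms(1-4)]) linarith
  moreover have "card S > 0"
    using assms(2,4,5) by (simp add: card_gt_0_iff finite_subset)
  ultimately show "real (card (edge_boundary G S)) / real (card S) \<ge> real (card (group_center G))"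
    by (simp add: pos_le_divide_eq mult.commute flip: of_nat_mult)
next
  show "int (card (edge_boundary G S)) = int (card S) * int (card (group_center G))
    + int (card (group_center G \<inter> S)) *
        (int (card (carrier G)) - 2 * int (card S) - int (card (group_center G - S)))
    + (\<Sum>u \<in> S - group_center G. int (card (F_set G u - S)))"
    using card_edge_boundary_formula[OF assms(2,4)] .
qed

end
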